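(* Let $(\mathrm{Con},\sqsubseteq,(s_i)_{i \in G})$ be a spatial constraint system and let $(\Delta_I)_{I \subseteq G}$ be its distributed spaces. Suppose that $(\mathrm{Con},\sqsubseteq)$ is completely distributive. Let $\delta^+_K:\mathrm{Con} \to \mathrm{Con}$, with $K\subseteq G$, be defined by \[ \delta^+_K(c) = \bigwedge\left\{ \bigsqcup_{k \in K} s_k(a_k) \;\middle|\; (a_k)_{k \in K} \in \mathrm{Con}^K \text{ and } \bigsqcup_{k \in K} a_k \sqsupseteq c \right\}. \] Then $\Delta_K = \delta^+_K$.
   Context: A constraint system is a complete lattice $(\mathrm{Con}, \sqsubseteq)$ with join $\sqcup$ (and $\bigsqcup$ for arbitrary joins), bottom $\mathit{true}$; $\bigwedge$ denotes the greatest lower bound (meet) of a set in $(\mathrm{Con},\sqsubseteq)$, and $c \sqsupseteq d$ means $d \sqsubseteq c$. A space function is a continuous self-map $f:\mathrm{Con}\to\mathrm{Con}$ (preserving joins of directed sets) with $f(\mathit{true})=\mathit{true}$ and $f(c \sqcup d) = f(c) \sqcup f(d)$. A spatial constraint system equips $\mathrm{Con}$ with a space function $s_i$ for each agent $i$ of a possibly infinite set $G$. Space functions are ordered pointwise: $f \sqsubseteq g$ iff $f(c) \sqsubseteq g(c)$ for all $c$; the set of space functions is a complete lattice under this order. The distributed space of a group $I \subseteq G$ is $\Delta_I = \max\{ f \text{ space function} \mid f \sqsubseteq s_i \text{ for every } i \in I\}$. $\mathrm{Con}^K$ is the set of functions $K \to \mathrm{Con}$. Complete distributivity: for any doubly indexed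 family $\{x_{ij}\}_{i\in I, j \in J_i}$, $\bigsqcup_{i\in I}\bigwedge_{j\in J_i} x_{ij} = \bigwedge_{f\in F}\bigsqcup_{i \in I} x_{i f(i)}$, with $F$ the choice functions $f(i)\in J_i$. *)

theory Defs
  imports Main
begin

definition directed :: "'a::order set \<Rightarrow> bool" where
  "directed D \<longleftrightarrow> D \<noteq> {} \<and> (\<forall>x\<in>D. \<forall>y\<in>D. \<exists>z\<in>D. x \<le> z \<and> y \<le> z)"

definition space_function :: "('a::complete_lattice \<Rightarrow> 'a) \<Rightarrow> bool" where
  "space_function f \<longleftrightarrow>
     (\<forall>D. directed D \<longrightarrow> f (Sup D) = Sup (f ` D)) \<and>
     f bot = bot \<and>
     (\<forall>c d. f (sup c d) = sup (f c) (f d))"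

definition spatial_cs :: "('g \<Rightarrow> 'a::complete_lattice \<Rightarrow> 'a) \<Rightarrow> bool" where
  "spatial_cs s \<longleftrightarrow> (\<forall>i. space_function (s i))"

definition distributed_space :: "('g \<Rightarrow> 'a::complete_lattice \<Rightarrow> 'a) \<Rightarrow> 'g set \<Rightarrow> 'a \<Rightarrow> 'a" where
  "distributed_space s I = (GREATEST f. space_function f \<and> (\<forall>i\<in>I. f \<le> s i))"

definition delta_plus :: "('g \<Rightarrow> 'a::complete_lattice \<Rightarrow> 'a) \<Rightarrow> 'g set \<Rightarrow> 'a \<Rightarrow> 'a" where
  "delta_plus s K c = Inf {(SUP k\<in>K. s k (a k)) | a. c \<le> (SUP k\<in>K. a k)}"

end

theory Submission
  imports Defs
begin

text \<open>
  \<open>\<delta>\<^sup>+\<^sub>K\<close> lies below every \<open>s\<^sub>i\<close>, \<open>i \<in> K\<close> (take \<open>a\<^sub>i = c\<close> and \<open>a\<^sub>k = true\<close> otherwise), and above every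
  space function \<open>f\<close> below all of them, since \<open>c \<sqsubseteq> \<Squnion>\<^sub>k a\<^sub>k\<close> gives
  \<open>f c \<sqsubseteq> \<Squnion>\<^sub>k f a\<^sub>k \<sqsubseteq> \<Squnion>\<^sub>k s\<^sub>k a\<^sub>k\<close>. So it is the distributed space as soon as it is a space
  function, i.e.\ preserves arbitrary joins. Complete distributivity turns the join of the
  meets \<open>\<delta>\<^sup>+\<^sub>K d\<close>, \<open>d \<in> D\<close>, into a meet over choices of one witness family \<open>a\<^sup>d\<close> per \<open>d\<close>,
  and then \<open>(\<Squnion>\<^sub>d a\<^sup>d\<^sub>k)\<^sub>k\<close> is a witness for \<open>\<Squnion>D\<close> whose value is \<open>\<Squnion>\<^sub>d \<Squnion>\<^sub>k s\<^sub>k a\<^sup>d\<^sub>k\<close>.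
\<close>

lemma space_function_mono:
  assumes "space_function f" shows "mono f"
proof
  fix x y :: 'a assume "x \<le> y"
  then have "f y = sup (f x) (f y)"
    using assms unfolding space_function_def by (metis sup.absorb2)
  then show "f x \<le> f y" by (metis sup.cobounded1)
qed

lemma space_function_Sup:
  fixes f :: "'a::complete_lattice \<Rightarrow> 'a"
  assumes f: "space_function f" shows "f (Sup X) = Sup (f ` X)"
proof -
  \<comment> \<open>\<open>\<Squnion>X\<close> is the directed join of the joins of the finite subsets of \<open>X\<close>.\<close>
  let ?Fin = "{F. finite F \<and> F \<subseteq> X}"
  have Fin_cover: "\<Union> ?Fin = X" by blast
  have Sup_finite: "f (Sup F) = Sup (f ` F)" if "finite F" for F
    using that f unfolding space_function_def by (induction F rule: finite_induct) simp_all
  have "directed (Sup ` ?Fin)" unfolding directed_def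
  proof (intro conjI ballI)
    fix x y assume "x \<in> Sup ` ?Fin" "y \<in> Sup ` ?Fin"
    then obtain F G where "F \<in> ?Fin" "G \<in> ?Fin" "x = Sup F" "y = Sup G" by blast
    then show "\<exists>z\<in>Sup ` ?Fin. x \<le> z \<and> y \<le> z"
      by (intro bexI[of _ "Sup (F \<union> G)"]) (auto intro: Sup_subset_mono)
  qed blast
  then have "f (SUP F\<in>?Fin. Sup F) = (SUP F\<in>?Fin. f (Sup F))"
    using f unfolding space_function_def by (simp add: image_image)
  moreover have "Sup X = (SUP F\<in>?Fin. Sup F)"
    using SUP_UNION[of id "\<lambda>F. F" ?Fin] by (simp add: Fin_cover)
  moreover have "(SUP F\<in>?Fin. f (Sup F)) = Sup (f ` X)"
    using SUP_UNION[of f "\<lambda>F. F" ?Fin] by (simp add: Fin_cover Sup_finite)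
  ultimately show ?thesis by simp
qed

lemma space_function_SUP:
  fixes f :: "'a::complete_lattice \<Rightarrow> 'a"
  assumes "space_function f" shows "f (SUP k\<in>K. a k) = (SUP k\<in>K. f (a k))"
  using space_function_Sup[OF assms, of "a ` K"] by (simp add: image_image)

lemma space_function_iff_Sup:
  fixes f :: "'a::complete_lattice \<Rightarrow> 'a"
  shows "space_function f \<longleftrightarrow> (\<forall>X. f (Sup X) = Sup (f ` X))"
proof
  assume "\<forall>X. f (Sup X) = Sup (f ` X)"
  then have "f (Sup {}) = Sup (f ` {})" "\<And>c d. f (Sup {c, d}) = Sup (f ` {c, d})" by blast+
  with \<open>\<forall>X. f (Sup X) = Sup (f ` X)\<close> show "space_function f"
    unfolding space_function_def by simp
qed (use space_function_Sup in blast)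

lemma delta_plus_le:
  assumes "c \<le> (SUP k\<in>K. a k)"
  shows "delta_plus s K c \<le> (SUP k\<in>K. s k (a k))"
  unfolding delta_plus_def by (rule Inf_lower) (use assms in blast)

lemma mono_delta_plus: "mono (delta_plus s K)"
  unfolding delta_plus_def by (intro monoI Inf_superset_mono) (auto intro: order.trans)

lemma delta_plus_le_space:
  fixes s :: "'g \<Rightarrow> 'a::complete_lattice \<Rightarrow> 'a"
  assumes "\<And>k. k \<in> K \<Longrightarrow> s k bot = bot" and "i \<in> K"
  shows "delta_plus s K \<le> s i"
proof (rule le_funI)
  fix c
  have single: "(SUP k\<in>K. if k = i then x else bot) = x" for x :: 'a
    using \<open>i \<in> K\<close> by (auto intro!: order.antisym SUP_least SUP_upper2)
  have "delta_plus s K c \<le> (SUP k\<in>K. s k (if k = i then c else bot))"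
    by (rule delta_plus_le) (simp only: single order_refl)
  also have "\<dots> = (SUP k\<in>K. if k = i then s i c else bot)"
    by (rule SUP_cong) (auto simp: assms(1))
  also have "\<dots> = s i c" by (rule single)
  finally show "delta_plus s K c \<le> s i c" .
qed

lemma le_delta_plus:
  assumes f: "space_function f" and below: "\<forall>i\<in>K. f \<le> s i"
  shows "f \<le> delta_plus s K"
proof (rule le_funI)
  fix c
  show "f c \<le> delta_plus s K c" unfolding delta_plus_def
  proof (rule Inf_greatest, clarify)
    fix a assume "c \<le> (SUP k\<in>K. a k)"
    then have "f c \<le> f (SUP k\<in>K. a k)" by (rule monoD[OF space_function_mono[OF f]])
    also have "\<dots> = (SUP k\<in>K. f (a k))" by (rule space_function_SUP[OF f])
    also have "\<dots> \<le> (SUP k\<in>K. s k (a k))" using below by (auto intro!: SUP_mono dest: le_funD)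
    finally show "f c \<le> (SUP k\<in>K. s k (a k))" .
  qed
qed

lemma delta_plus_Sup_le:
  assumes "\<And>k. k \<in> K \<Longrightarrow> space_function (s k)"
    and "\<And>d. d \<in> D \<Longrightarrow> d \<le> (SUP k\<in>K. a d k)"
  shows "delta_plus s K (Sup D) \<le> (SUP d\<in>D. SUP k\<in>K. s k (a d k))"
proof -
  have "Sup D \<le> (SUP d\<in>D. SUP k\<in>K. a d k)"
    by (rule Sup_least, rule SUP_upper2) (use assms(2) in auto)
  also have "\<dots> = (SUP k\<in>K. SUP d\<in>D. a d k)" by (rule SUP_commute)
  finally have "delta_plus s K (Sup D) \<le> (SUP k\<in>K. s k (SUP d\<in>D. a d k))"
    by (rule delta_plus_le)
  also have "\<dots> = (SUP k\<in>K. SUP d\<in>D. s k (a d k))"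
    by (rule SUP_cong) (simp_all add: assms(1) space_function_SUP)
  also have "\<dots> = (SUP d\<in>D. SUP k\<in>K. s k (a d k))" by (rule SUP_commute)
  finally show ?thesis .
qed

lemma le_SUP_Inf_choiceI:
  fixes x :: "'a::complete_distrib_lattice"
  assumes "\<And>\<phi>. \<forall>d\<in>D. \<phi> d \<in> A d \<Longrightarrow> x \<le> (SUP d\<in>D. \<phi> d)"
  shows "x \<le> (SUP d\<in>D. Inf (A d))"
proof -
  have "(SUP d\<in>D. Inf (A d)) = Sup (Inf ` A ` D)" by (simp add: image_image)
  also have "\<dots> = Inf (Sup ` {f ` A ` D |f. \<forall>B\<in>A ` D. f B \<in> B})" by (rule Sup_Inf)
  also have "x \<le> \<dots>"
  proof (rule Inf_greatest, clarify)
    fix f assume "\<forall>B\<in>A ` D. f B \<in> B"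
    then have "x \<le> (SUP d\<in>D. f (A d))" by (intro assms) blast
    then show "x \<le> Sup (f ` A ` D)" by (simp add: image_image)
  qed
  finally show ?thesis .
qed

lemma delta_plus_Sup:
  fixes s :: "'g \<Rightarrow> 'a::complete_distrib_lattice \<Rightarrow> 'a"
  assumes "\<And>k. k \<in> K \<Longrightarrow> space_function (s k)"
  shows "delta_plus s K (Sup D) = Sup (delta_plus s K ` D)"
proof (rule order.antisym)
  show "delta_plus s K (Sup D) \<le> Sup (delta_plus s K ` D)"
    unfolding delta_plus_def
  proof (rule le_SUP_Inf_choiceI)
    fix \<phi> assume "\<forall>d\<in>D. \<phi> d \<in> {(SUP k\<in>K. s k (a k)) | a. d \<le> (SUP k\<in>K. a k)}"
    then have "\<forall>d\<in>D. \<exists>a. d \<le> (SUP k\<in>K. a k) \<and> \<phi> d = (SUP k\<in>K. s k (a k))"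
      by blast
    then obtain a where a_cover: "\<And>d. d \<in> D \<Longrightarrow> d \<le> (SUP k\<in>K. a d k)"
      and a_eq: "\<And>d. d \<in> D \<Longrightarrow> \<phi> d = (SUP k\<in>K. s k (a d k))"
      by metis
    have "delta_plus s K (Sup D) \<le> (SUP d\<in>D. SUP k\<in>K. s k (a d k))"
      by (rule delta_plus_Sup_le[OF assms a_cover])
    also have "\<dots> = (SUP d\<in>D. \<phi> d)" by (simp add: a_eq)
    finally show "Inf {(SUP k\<in>K. s k (a k)) | a. Sup D \<le> (SUP k\<in>K. a k)} \<le> (SUP d\<in>D. \<phi> d)"
      by (simp add: delta_plus_def)
  qed
qed (rule mono_Sup[OF mono_delta_plus])

lemma space_function_delta_plus:
  fixes s :: "'g \<Rightarrow> 'a::complete_distrib_lattice \<Rightarrow> 'a"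
  assumes "\<And>k. k \<in> K \<Longrightarrow> space_function (s k)"
  shows "space_function (delta_plus s K)"
  unfolding space_function_iff_Sup by (intro allI delta_plus_Sup assms)

theorem mainTheorem7:
  fixes s :: "'g \<Rightarrow> 'a::complete_distrib_lattice \<Rightarrow> 'a"
    and K :: "'g set"
  assumes "spatial_cs s"
  shows "distributed_space s K = delta_plus s K"
  unfolding distributed_space_def
proof (rule Greatest_equality)
  have space: "space_function (s k)" for k
    using assms unfolding spatial_cs_def by blast
  then have "s k bot = bot" for k
    unfolding space_function_def by blast
  with space show "space_function (delta_plus s K) \<and> (\<forall>i\<in>K. delta_plus s K \<le> s i)"
    by (simp add: space_function_delta_plus delta_plus_le_space)
qed (simp add: le_delta_plus)

end
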